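(* Let $F_n=f_1\cdots f_n$ be a composition sequence generated by a finite subset of $\mathcal{M}(\mathbb{D})$, and suppose there are points $z_0,z_1,z_2,\dots$ on $\partial\mathbb{D}$ with $f_n(z_n)=z_{n-1}$ for each $n\ge1$. Let $\gamma_n=1/|f_n'(z_n)|$. Then $(F_n)$ is of limit-disc type if and only if $\sum_{n=1}^\infty\gamma_1\gamma_2\cdots\gamma_n<+\infty$. Furthermore, if $(F_n)$ is of limit-disc type and converges ideally to a point $q$, then $q\neq z_0$.
   Context: $\mathbb{D}$ is the open unit disc; $\mathcal{M}(\mathbb{D})$ is the set of Möbius transformations $f$ with $f(\mathbb{D})\subset\mathbb{D}$, $f(\mathbb{D})\neq\mathbb{D}$. $(F_n)$ is of limit-disc type if $\bigcap_n F_n(\overline{\mathbb{D}})$ is a closed disc of positive radius rather than a single point. Möbius maps act on $\mathbb{H}^3=\{(x,y,t):t>0\}$ via Poincaré extension, $j=(0,0,1)$; $(F_n)$ converges ideally to $q\in\overline{\mathbb{C}}$ if $F_n(j)\to q$ in the chordal metric. *)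

theory Defs
  imports "HOL-Analysis.Analysis"
begin

text \<open>A Moebius transformation z |-> (a z + b)/(c z + d) is represented by its
  coefficient tuple (a,b,c,d) with a d - b c nonzero.\<close>
type_synonym mob = "complex \<times> complex \<times> complex \<times> complex"

fun is_mob :: "mob \<Rightarrow> bool" where
  "is_mob (a, b, c, d) \<longleftrightarrow> a * d - b * c \<noteq> 0"

fun mob_fun :: "mob \<Rightarrow> complex \<Rightarrow> complex" where
  "mob_fun (a, b, c, d) z = (a * z + b) / (c * z + d)"

text \<open>M(D): Moebius maps f with f(D) a subset of D (in particular no pole in D,
  since the pole is sent to infinity) and f(D) different from D.\<close>
fun in_MD :: "mob \<Rightarrow> bool" where
  "in_MD (a, b, c, d) \<longleftrightarrow> is_mob (a, b, c, d)
     \<and> (\<forall>z\<in>ball 0 1. c * z + d \<noteq> 0 \<and> mob_fun (a, b, c, d) z \<in> ball 0 1)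
     \<and> mob_fun (a, b, c, d) ` ball 0 1 \<noteq> ball 0 1"

text \<open>Composition sequence F_n = f_1 o ... o f_n (index 0 of f unused).\<close>
fun comp_seq :: "(nat \<Rightarrow> mob) \<Rightarrow> nat \<Rightarrow> complex \<Rightarrow> complex" where
  "comp_seq f 0 = id"
| "comp_seq f (Suc n) = comp_seq f n \<circ> mob_fun (f (Suc n))"

definition limit_disc_type :: "(nat \<Rightarrow> mob) \<Rightarrow> bool" where
  "limit_disc_type f \<longleftrightarrow>
     (\<exists>c r. r > 0 \<and> (\<Inter>n\<in>{1..}. comp_seq f n ` cball 0 1) = cball c r)"

text \<open>Poincare extension to upper half-space H^3 = {(z,t). t > 0} (points as
  complex x real).\<close>
fun poincare_ext :: "mob \<Rightarrow> complex \<times> real \<Rightarrow> complex \<times> real" where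
  "poincare_ext (a, b, c, d) (z, t) =
     (let N = (cmod (c * z + d))\<^sup>2 + (cmod c)\<^sup>2 * t\<^sup>2 in
      (((a * z + b) * cnj (c * z + d) + a * cnj c * complex_of_real (t\<^sup>2)) / complex_of_real N,
       cmod (a * d - b * c) * t / N))"

fun ext_comp_seq :: "(nat \<Rightarrow> mob) \<Rightarrow> nat \<Rightarrow> complex \<times> real \<Rightarrow> complex \<times> real" where
  "ext_comp_seq f 0 = id"
| "ext_comp_seq f (Suc n) = ext_comp_seq f n \<circ> poincare_ext (f (Suc n))"

text \<open>Chordal metric on R^3 \<union> {\<infinity>}; None is the point at infinity.\<close>
definition sqnorm3 :: "complex \<times> real \<Rightarrow> real" where
  "sqnorm3 p = (cmod (fst p))\<^sup>2 + (snd p)\<^sup>2"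

fun chordal :: "(complex \<times> real) option \<Rightarrow> (complex \<times> real) option \<Rightarrow> real" where
  "chordal (Some p) (Some q) =
     2 * sqrt ((cmod (fst p - fst q))\<^sup>2 + (snd p - snd q)\<^sup>2)
       / sqrt ((1 + sqnorm3 p) * (1 + sqnorm3 q))"
| "chordal (Some p) None = 2 / sqrt (1 + sqnorm3 p)"
| "chordal None (Some q) = 2 / sqrt (1 + sqnorm3 q)"
| "chordal None None = 0"

text \<open>Extended complex plane: None = \<infinity>; embedded as boundary of H^3.\<close>
fun embed_ext :: "complex option \<Rightarrow> (complex \<times> real) option" where
  "embed_ext (Some z) = Some (z, 0)"
| "embed_ext None = None"

definition converges_ideally :: "(nat \<Rightarrow> mob) \<Rightarrow> complex option \<Rightarrow> bool" where
  "converges_ideally f q \<longleftrightarrow>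
     (\<lambda>n. chordal (Some (ext_comp_seq f n (0, 1))) (embed_ext q)) \<longlonglongrightarrow> 0"

end

theory Submission
  imports Defs
begin

text \<open>Conjugating by a Cayley map that sends \<open>z_n\<close> to infinity turns \<open>f_n\<close> into an affine
  self-map \<open>u \<mapsto> \<gamma>_n u + \<beta>_n\<close> of the upper half-plane, where \<open>\<gamma>_n = 1/|f_n'(z_n)|\<close> and
  \<open>Im \<beta>_n > 0\<close> because \<open>f_n(D) \<noteq> D\<close>. Hence \<open>F_n\<close> becomes \<open>u \<mapsto> \<gamma>_1\<cdots>\<gamma>_n u + b_n\<close>, and
  \<open>F_n\<close> maps the closed disc onto the horodisc at \<open>z_0\<close> of height
  \<open>Im b_n = \<Sum>_{k<n} \<gamma>_1\<cdots>\<gamma>_k Im \<beta>_{k+1}\<close>. A map in \<open>M(D)\<close> sends only one boundary point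
  to the circle, so a finite generating set gives bounds \<open>0 < lo \<le> Im \<beta>_n\<close>, \<open>|\<beta>_n| \<le> hi\<close>;
  thus the horodiscs shrink to a disc of positive radius iff \<open>\<Sum> \<gamma>_1\<cdots>\<gamma>_n < \<infinity>\<close>. In that case
  \<open>b_n\<close> converges in the closed upper half-plane and \<open>\<gamma>_1\<cdots>\<gamma>_n \<longrightarrow> 0\<close>, so \<open>F_n(j)\<close> tends
  to the inverse Cayley image of \<open>lim b_n\<close>, which is never \<open>z_0\<close>.\<close>

section \<open>Moebius maps as coefficient tuples\<close>

fun mob_mult :: "mob \<Rightarrow> mob \<Rightarrow> mob" where
  "mob_mult (a, b, c, d) (a', b', c', d') = (a*a' + b*c', a*b' + b*d', c*a' + d*c', c*b' + d*d')"

fun mob_scale :: "complex \<Rightarrow> mob \<Rightarrow> mob" where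
  "mob_scale k (a, b, c, d) = (k*a, k*b, k*c, k*d)"

lemma mob_fun_mult:
  assumes "c'*z + d' \<noteq> 0"
  shows "mob_fun (a, b, c, d) (mob_fun (a', b', c', d') z) = mob_fun (mob_mult (a, b, c, d) (a', b', c', d')) z"
proof -
  have "c*((a'*z + b')/(c'*z + d')) + d = ((c*a' + d*c')*z + (c*b' + d*d'))/(c'*z + d')"
    "a*((a'*z + b')/(c'*z + d')) + b = ((a*a' + b*c')*z + (a*b' + b*d'))/(c'*z + d')"
    using assms by (simp_all add: divide_simps) (simp_all add: algebra_simps)
  then show ?thesis using assms by simp
qed

lemma mob_fun_scale: "k \<noteq> 0 \<Longrightarrow> mob_fun (mob_scale k g) z = mob_fun g z"
  by (cases g) (simp add: distrib_left[symmetric] mult.assoc)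

lemma deriv_mob_fun:
  assumes "c*w + d \<noteq> 0"
  shows "deriv (mob_fun (a, b, c, d)) w = (a*d - b*c)/(c*w + d)\<^sup>2"
proof -
  have "mob_fun (a, b, c, d) = (\<lambda>z. (a*z + b)/(c*z + d))"
    by (rule ext) simp
  moreover have "((\<lambda>z. (a*z + b)/(c*z + d)) has_field_derivative (a*d - b*c)/(c*w + d)\<^sup>2) (at w)"
    using assms by (auto intro!: derivative_eq_intros simp: power2_eq_square algebra_simps)
  ultimately show ?thesis
    using DERIV_imp_deriv by metis
qed

lemma mob_fun_inj:
  assumes "a*d - b*c \<noteq> 0" "c*z + d \<noteq> 0" "c*w + d \<noteq> 0"
    and "mob_fun (a, b, c, d) z = mob_fun (a, b, c, d) w"
  shows "z = w"
proof -
  have "(a*z + b)*(c*w + d) = (a*w + b)*(c*z + d)"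
    using assms(2-4) by (simp add: field_simps)
  then have "(a*d - b*c)*(z - w) = 0"
    by (simp add: algebra_simps)
  then show ?thesis
    using assms(1) by simp
qed

lemma divide_eq_mult_cnj: "Y \<noteq> 0 \<Longrightarrow> X / Y = X * cnj Y / complex_of_real ((cmod Y)\<^sup>2)"
  unfolding complex_norm_square by (simp add: divide_simps)

lemma poincare_ext_denominator_pos:
  assumes "t > 0" "c \<noteq> 0 \<or> d \<noteq> 0"
  shows "(cmod (c*x + d))\<^sup>2 + (cmod c)\<^sup>2 * t\<^sup>2 > 0"
  using assms by (cases "c = 0") (auto intro: add_nonneg_pos)

lemma poincare_ext_scale: "k \<noteq> 0 \<Longrightarrow> poincare_ext (mob_scale k g) P = poincare_ext g P"
proof -
  assume k: "k \<noteq> 0"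
  obtain a b c d where g: "g = (a, b, c, d)" by (cases g)
  obtain x t where P: "P = (x, t)" by (cases P)
  have 1: "k*c*x + k*d = k*(c*x + d)" "k*a*x + k*b = k*(a*x + b)"
    "k*a*(k*d) - k*b*(k*c) = k^2*(a*d - b*c)"
    by (simp_all add: algebra_simps power2_eq_square)
  have N: "(cmod (k*(c*x + d)))\<^sup>2 + (cmod (k*c))\<^sup>2 * t\<^sup>2 = (cmod k)\<^sup>2 * ((cmod (c*x + d))\<^sup>2 + (cmod c)\<^sup>2 * t\<^sup>2)"
    by (simp only: norm_mult power_mult_distrib) (simp add: algebra_simps)
  have num: "(k*(a*x + b))*cnj(k*(c*x + d)) + k*a*cnj(k*c)*complex_of_real (t\<^sup>2)
      = complex_of_real ((cmod k)\<^sup>2) * ((a*x + b)*cnj(c*x + d) + a*cnj c * complex_of_real (t\<^sup>2))"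
    unfolding complex_norm_square by (simp add: algebra_simps)
  show ?thesis unfolding g P
    using k by (simp only: mob_scale.simps poincare_ext.simps Let_def 1 N num of_real_mult prod.inject)
      (simp add: norm_mult norm_power)
qed

lemma poincare_ext_mult_denominator:
  fixes a b c d a' b' c' d' x s :: complex
  assumes "cnj s = s"
  defines "X \<equiv> (a'*x + b')*cnj(c'*x + d') + a'*cnj c' * s"
    and "D \<equiv> (c'*x + d')*cnj(c'*x + d') + c'*cnj c' * s"
  shows "(c*X + d*D)*cnj(c*X + d*D) + c*cnj c*((a'*d' - b'*c')*cnj(a'*d' - b'*c') * s)
    = D * (((c*a' + d*c')*x + (c*b' + d*d'))*cnj((c*a' + d*c')*x + (c*b' + d*d')) + (c*a' + d*c')*cnj(c*a' + d*c')* s)"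
  unfolding X_def D_def using assms by (simp add: algebra_simps)

lemma poincare_ext_mult_numerator:
  fixes a b c d a' b' c' d' x s :: complex
  assumes "cnj s = s"
  defines "X \<equiv> (a'*x + b')*cnj(c'*x + d') + a'*cnj c' * s"
    and "D \<equiv> (c'*x + d')*cnj(c'*x + d') + c'*cnj c' * s"
  shows "(a*X + b*D)*cnj(c*X + d*D) + a*cnj c*((a'*d' - b'*c')*cnj(a'*d' - b'*c') * s)
    = D * (((a*a' + b*c')*x + (a*b' + b*d'))*cnj((c*a' + d*c')*x + (c*b' + d*d')) + (a*a' + b*c')*cnj(c*a' + d*c')* s)"
  unfolding X_def D_def using assms by (simp add: algebra_simps)
lemma poincare_ext_mult_height:
  fixes a b c d a' b' c' d' x :: complex and t :: real
  defines "D \<equiv> (cmod (c'*x + d'))\<^sup>2 + (cmod c')\<^sup>2*t\<^sup>2"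
    and "X \<equiv> (a'*x + b')*cnj(c'*x + d') + a'*cnj c' * complex_of_real (t\<^sup>2)"
    and "T \<equiv> cmod (a'*d' - b'*c') * t"
    and "N \<equiv> (cmod ((c*a' + d*c')*x + (c*b' + d*d')))\<^sup>2 + (cmod (c*a' + d*c'))\<^sup>2*t\<^sup>2"
  assumes D0: "D \<noteq> 0"
  shows "(cmod (c * (X / complex_of_real D) + d))\<^sup>2 + (cmod c)\<^sup>2 * (T/D)\<^sup>2 = N / D"
proof -
  have Dc: "complex_of_real D = (c'*x + d')*cnj(c'*x + d') + c'*cnj c' * complex_of_real (t\<^sup>2)"
    unfolding D_def by (simp only: of_real_add of_real_mult complex_norm_square)
  have T2: "complex_of_real (T\<^sup>2) = (a'*d' - b'*c')*cnj(a'*d' - b'*c') * complex_of_real (t\<^sup>2)"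
    unfolding T_def by (simp only: power_mult_distrib of_real_mult complex_norm_square)
  have Nc: "complex_of_real N = ((c*a' + d*c')*x + (c*b' + d*d'))*cnj((c*a' + d*c')*x + (c*b' + d*d'))
      + (c*a' + d*c')*cnj(c*a' + d*c')*complex_of_real (t\<^sup>2)"
    unfolding N_def by (simp only: of_real_add of_real_mult complex_norm_square)
  have "complex_of_real ((cmod (c*X + d*D))\<^sup>2 + (cmod c)\<^sup>2 * T\<^sup>2) = complex_of_real (D * N)"
    using poincare_ext_mult_denominator[where s="complex_of_real (t\<^sup>2)" and a'=a' and b'=b' and c'=c'
        and d'=d' and x=x and c=c and d=d]
    by (simp only: complex_cnj_complex_of_real of_real_add of_real_mult complex_norm_square T2 Dc Nc X_def)
  then have denom: "(cmod (c*X + d*D))\<^sup>2 + (cmod c)\<^sup>2 * T\<^sup>2 = D * N"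
    using of_real_eq_iff by blast
  have cz: "c * (X / complex_of_real D) + d = (c*X + d*D) / complex_of_real D"
    using D0 by (simp add: field_simps)
  have "(cmod (c * (X / complex_of_real D) + d))\<^sup>2 + (cmod c)\<^sup>2 * (T/D)\<^sup>2
      = ((cmod (c*X + d*D))\<^sup>2 + (cmod c)\<^sup>2 * T\<^sup>2) / D\<^sup>2"
    unfolding cz norm_divide norm_of_real using D0 by (simp add: power_divide add_divide_distrib)
  also have "\<dots> = N / D"
    using denom D0 by (simp add: power2_eq_square)
  finally show ?thesis .
qed

lemma poincare_ext_mult_point:
  fixes a b c d a' b' c' d' x :: complex and t :: real
  defines "D \<equiv> (cmod (c'*x + d'))\<^sup>2 + (cmod c')\<^sup>2*t\<^sup>2"
    and "X \<equiv> (a'*x + b')*cnj(c'*x + d') + a'*cnj c' * complex_of_real (t\<^sup>2)"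
    and "T \<equiv> cmod (a'*d' - b'*c') * t"
  assumes D0: "D \<noteq> 0"
  shows "(a * (X / complex_of_real D) + b) * cnj (c * (X / complex_of_real D) + d)
      + a * cnj c * complex_of_real ((T / D)\<^sup>2)
    = complex_of_real D * (((a*a' + b*c')*x + (a*b' + b*d'))*cnj((c*a' + d*c')*x + (c*b' + d*d'))
      + (a*a' + b*c')*cnj(c*a' + d*c')*complex_of_real (t\<^sup>2)) / complex_of_real (D\<^sup>2)"
proof -
  have Dc: "complex_of_real D = (c'*x + d')*cnj(c'*x + d') + c'*cnj c' * complex_of_real (t\<^sup>2)"
    unfolding D_def by (simp only: of_real_add of_real_mult complex_norm_square)
  have T2: "complex_of_real (T\<^sup>2) = (a'*d' - b'*c')*cnj(a'*d' - b'*c') * complex_of_real (t\<^sup>2)"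
    unfolding T_def by (simp only: power_mult_distrib of_real_mult complex_norm_square)
  have cz: "c * (X / complex_of_real D) + d = (c*X + d*D) / complex_of_real D"
    and az: "a * (X / complex_of_real D) + b = (a*X + b*D) / complex_of_real D"
    using D0 by (simp_all add: field_simps)
  have "(a * (X / complex_of_real D) + b) * cnj (c * (X / complex_of_real D) + d)
      + a * cnj c * complex_of_real ((T / D)\<^sup>2)
      = ((a*X + b*D)*cnj(c*X + d*D) + a*cnj c*complex_of_real (T\<^sup>2)) / complex_of_real (D\<^sup>2)"
    unfolding az cz using D0 by (simp add: field_simps power2_eq_square)
  also have "(a*X + b*D)*cnj(c*X + d*D) + a*cnj c*complex_of_real (T\<^sup>2)
      = complex_of_real D * (((a*a' + b*c')*x + (a*b' + b*d'))*cnj((c*a' + d*c')*x + (c*b' + d*d'))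
        + (a*a' + b*c')*cnj(c*a' + d*c')*complex_of_real (t\<^sup>2))"
    using poincare_ext_mult_numerator[where s="complex_of_real (t\<^sup>2)" and a'=a' and b'=b' and c'=c'
        and d'=d' and x=x and a=a and b=b and c=c and d=d]
    by (simp only: complex_cnj_complex_of_real T2 Dc X_def)
  finally show ?thesis .
qed

lemma poincare_ext_mult:
  assumes t: "t > 0" and inner: "c' \<noteq> 0 \<or> d' \<noteq> 0"
    and outer: "c*a' + d*c' \<noteq> 0 \<or> c*b' + d*d' \<noteq> 0"
  shows "poincare_ext (a, b, c, d) (poincare_ext (a', b', c', d') (x, t))
       = poincare_ext (mob_mult (a, b, c, d) (a', b', c', d')) (x, t)"
proof -
  define D where "D = (cmod (c'*x + d'))\<^sup>2 + (cmod c')\<^sup>2*t\<^sup>2"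
  define X where "X = (a'*x + b')*cnj(c'*x + d') + a'*cnj c' * complex_of_real (t\<^sup>2)"
  define T where "T = cmod (a'*d' - b'*c') * t"
  define N where "N = (cmod ((c*a' + d*c')*x + (c*b' + d*d')))\<^sup>2 + (cmod (c*a' + d*c'))\<^sup>2*t\<^sup>2"
  have D0: "D \<noteq> 0" and N0: "N \<noteq> 0"
    unfolding D_def N_def using poincare_ext_denominator_pos[OF t] inner outer by (metis less_irrefl)+
  have det: "cmod (a*d - b*c) * cmod (a'*d' - b'*c')
      = cmod ((a*a' + b*c')*(c*b' + d*d') - (a*b' + b*d')*(c*a' + d*c'))"
  proof -
    have "(a*a' + b*c')*(c*b' + d*d') - (a*b' + b*d')*(c*a' + d*c') = (a*d - b*c)*(a'*d' - b'*c')"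
      by (simp add: algebra_simps)
    then show ?thesis
      by (simp add: norm_mult)
  qed
  have inner_eq: "poincare_ext (a', b', c', d') (x, t) = (X / complex_of_real D, T / D)"
    by (simp add: Let_def D_def X_def T_def)
  show ?thesis
    unfolding inner_eq
    unfolding mob_mult.simps poincare_ext.simps Let_def
    unfolding poincare_ext_mult_height[where a'=a' and b'=b' and c'=c' and d'=d' and c=c and d=d
        and x=x and t=t, folded D_def X_def T_def N_def, OF D0]
      prod.inject
    apply (intro conjI)
    subgoal
      using poincare_ext_mult_point[where a'=a' and b'=b' and c'=c' and d'=d' and a=a and b=b
          and c=c and d=d and x=x and t=t, folded D_def X_def T_def, OF D0] D0 N0
      unfolding N_def[symmetric] by (simp add: field_simps power2_eq_square)
    subgoal
      using D0 N0 det unfolding N_def[symmetric] T_def by (simp add: field_simps)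
    done
qed

lemma poincare_ext_upper_triangular:
  assumes "D \<noteq> 0"
  shows "poincare_ext (A, B, 0, D) (u, s) = ((A*u + B)/D, cmod (A/D) * s)"
  using assms complex_norm_square[of D]
  by (simp add: Let_def norm_mult norm_divide power2_eq_square field_simps)
section \<open>Cayley maps and horodiscs\<close>

text \<open>For \<open>|w| = 1\<close>, \<open>cayley w\<close> is the Cayley map \<open>z \<mapsto> i(z + w)/(w - z)\<close>: it sends the
  unit disc onto the upper half-plane, the unit circle onto the real axis and \<open>w\<close> to infinity.\<close>
definition cayley :: "complex \<Rightarrow> mob" where
  "cayley w = (\<i>, \<i>*w, -1, w)"

definition cayley_inv :: "complex \<Rightarrow> mob" where
  "cayley_inv w = (w, -\<i>*w, 1, \<i>)"

lemma Im_cayley: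
  assumes "cmod w = 1"
  shows "Im (mob_fun (cayley w) z) = (1 - (cmod z)\<^sup>2) / (cmod (w - z))\<^sup>2"
proof (cases "z = w")
  case True
  then show ?thesis using assms by (simp add: cayley_def)
next
  case False
  have w2: "(Re w)\<^sup>2 + (Im w)\<^sup>2 = 1"
    using assms by (simp add: cmod_def)
  have z2: "cmod z * cmod z = Re z * Re z + Im z * Im z"
    using cmod_power2[of z] by (simp add: power2_eq_square)
  have "mob_fun (cayley w) z = \<i>*(z + w)/(w - z)"
    unfolding cayley_def by (simp add: algebra_simps)
  also have "\<dots> = \<i>*(z + w)*cnj(w - z) / complex_of_real ((cmod (w - z))\<^sup>2)"
    using False by (intro divide_eq_mult_cnj) simp
  also have "\<i>*(z + w)*cnj(w - z) = \<i>*complex_of_real(1 - (cmod z)\<^sup>2) - complex_of_real (2 * Im (z*cnj w))"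
    using w2 z2 unfolding power2_eq_square by (simp add: complex_eq_iff algebra_simps)
  finally show ?thesis
    by (simp add: Im_divide_of_real)
qed

lemma Im_cayley_nonneg: "cmod w = 1 \<Longrightarrow> cmod y \<le> 1 \<Longrightarrow> 0 \<le> Im (mob_fun (cayley w) y)"
  unfolding Im_cayley by (intro divide_nonneg_nonneg) (auto simp: abs_square_le_1)

lemma Im_cayley_pos: "cmod w = 1 \<Longrightarrow> cmod y < 1 \<Longrightarrow> 0 < Im (mob_fun (cayley w) y)"
  unfolding Im_cayley by (intro divide_pos_pos) (auto simp: abs_square_less_1)

lemma Im_cayley_unit: "cmod w = 1 \<Longrightarrow> cmod y = 1 \<Longrightarrow> Im (mob_fun (cayley w) y) = 0"
  by (simp add: Im_cayley)

lemma poincare_ext_cayley_j: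
  assumes "cmod w = 1"
  shows "poincare_ext (cayley w) (0, 1) = (0, 1)"
proof -
  have "w * cnj w = 1"
    using assms complex_norm_square[of w] by simp
  moreover have "cmod (\<i> * w - \<i> * w * - 1) = 2"
    using assms by (simp add: norm_mult)
  ultimately show ?thesis
    unfolding cayley_def poincare_ext.simps Let_def by (simp add: assms algebra_simps norm_mult)
qed

lemma mob_mult_cayley_inv_cayley: "mob_mult (cayley_inv w) (cayley w) = (2*\<i>*w, 0, 0, 2*\<i>*w)"
  unfolding cayley_inv_def cayley_def by simp

lemma cayley_inv_cayley:
  assumes "w \<noteq> 0" "z \<noteq> w"
  shows "mob_fun (cayley_inv w) (mob_fun (cayley w) z) = z"
  using assms unfolding cayley_def cayley_inv_def
  by (subst mob_fun_mult) (auto simp: mob_mult_cayley_inv_cayley[unfolded cayley_def cayley_inv_def])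

lemma cayley_cayley_inv:
  assumes "w \<noteq> 0" "u \<noteq> -\<i>"
  shows "mob_fun (cayley w) (mob_fun (cayley_inv w) u) = u"
proof -
  have "mob_mult (cayley w) (cayley_inv w) = (2*\<i>*w, 0, 0, 2*\<i>*w)"
    unfolding cayley_inv_def cayley_def by (simp add: algebra_simps)
  moreover have "u + \<i> \<noteq> 0"
    using assms(2) by (simp add: eq_neg_iff_add_eq_0[symmetric])
  ultimately show ?thesis
    using assms(1) unfolding cayley_def cayley_inv_def by (subst mob_fun_mult) auto
qed

lemma poincare_ext_cayley_inv_cayley:
  assumes "w \<noteq> 0" "t > 0"
  shows "poincare_ext (cayley_inv w) (poincare_ext (cayley w) (x, t)) = (x, t)"
proof -
  have "poincare_ext (cayley_inv w) (poincare_ext (cayley w) (x, t))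
      = poincare_ext (2*\<i>*w, 0, 0, 2*\<i>*w) (x, t)"
    using assms unfolding mob_mult_cayley_inv_cayley[symmetric] cayley_inv_def cayley_def
    by (intro poincare_ext_mult) auto
  also have "\<dots> = (x, t)"
    using assms by (subst poincare_ext_upper_triangular) auto
  finally show ?thesis .
qed

lemma norm_cayley_inv:
  assumes "cmod w = 1"
  shows "cmod (mob_fun (cayley_inv w) u) = cmod (u - \<i>) / cmod (u + \<i>)"
proof -
  have "mob_fun (cayley_inv w) u = w * (u - \<i>) / (u + \<i>)"
    unfolding cayley_inv_def by (simp add: algebra_simps)
  then show ?thesis
    using assms by (simp add: norm_mult norm_divide)
qed

lemma cmod_minus_i_square: "(cmod (u - \<i>))\<^sup>2 = (cmod (u + \<i>))\<^sup>2 - 4 * Im u"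
  by (simp only: cmod_power2) (simp add: power2_eq_square algebra_simps)

lemma cayley_inv_in_ball:
  assumes "cmod w = 1" "Im u > 0"
  shows "cmod (mob_fun (cayley_inv w) u) < 1"
proof -
  have "(cmod (u - \<i>))\<^sup>2 < (cmod (u + \<i>))\<^sup>2"
    using cmod_minus_i_square[of u] assms by simp
  then have "cmod (u - \<i>) < cmod (u + \<i>)"
    by (simp add: power_less_imp_less_base)
  moreover have "u + \<i> \<noteq> 0"
    using assms(2) by (auto simp: add_eq_0_iff complex_eq_iff)
  ultimately show ?thesis
    unfolding norm_cayley_inv[OF assms(1)] by simp
qed

lemma cayley_inv_in_cball:
  assumes "cmod w = 1" "Im u \<ge> 0"
  shows "cmod (mob_fun (cayley_inv w) u) \<le> 1"
proof -
  have "(cmod (u - \<i>))\<^sup>2 \<le> (cmod (u + \<i>))\<^sup>2"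
    using cmod_minus_i_square[of u] assms by simp
  then have "cmod (u - \<i>) \<le> cmod (u + \<i>)"
    by (rule power2_le_imp_le) simp
  moreover have "u + \<i> \<noteq> 0"
    using assms(2) by (auto simp: add_eq_0_iff complex_eq_iff)
  ultimately show ?thesis
    unfolding norm_cayley_inv[OF assms(1)] by simp
qed

lemma cayley_inv_neq:
  assumes "w \<noteq> 0"
  shows "mob_fun (cayley_inv w) u \<noteq> w"
proof
  assume h: "mob_fun (cayley_inv w) u = w"
  show False
  proof (cases "u + \<i> = 0")
    case True
    then show False using h assms unfolding cayley_inv_def by simp
  next
    case False
    then have "w*u - \<i>*w = w*(u + \<i>)"
      using h unfolding cayley_inv_def by (simp add: field_simps)
    then have "w * (2*\<i>) = 0"
      by (simp add: algebra_simps)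
    then show False
      using assms by simp
  qed
qed

lemma tendsto_poincare_ext_cayley_inv:
  assumes u: "u \<longlonglongrightarrow> u0" and s: "s \<longlonglongrightarrow> 0" and "Im u0 \<ge> 0"
  shows "(\<lambda>n. poincare_ext (cayley_inv w) (u n, s n)) \<longlonglongrightarrow> (mob_fun (cayley_inv w) u0, 0)"
proof -
  have ui: "u0 + \<i> \<noteq> 0"
    using assms(3) by (auto simp: complex_eq_iff)
  have "(\<lambda>n. poincare_ext (cayley_inv w) (u n, s n)) \<longlonglongrightarrow> poincare_ext (cayley_inv w) (u0, 0)"
    unfolding cayley_inv_def poincare_ext.simps Let_def
    by (intro tendsto_intros u s) (use ui in auto)
  also have "poincare_ext (cayley_inv w) (u0, 0) = (mob_fun (cayley_inv w) u0, 0)"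
    using divide_eq_mult_cnj[OF ui, of "w * u0 - \<i> * w"] unfolding cayley_inv_def by simp
  finally show ?thesis .
qed

lemma cayley_inj:
  assumes "w \<noteq> 0" "y \<noteq> w" "y' \<noteq> w" "mob_fun (cayley w) y = mob_fun (cayley w) y'"
  shows "y = y'"
  using cayley_inv_cayley[OF assms(1,2)] cayley_inv_cayley[OF assms(1,3)] assms(4) by metis

lemma cayley_onto_upper_half_plane:
  assumes "cmod w = 1" "Im u > 0"
  obtains y where "cmod y < 1" "y \<noteq> w" "mob_fun (cayley w) y = u"
proof
  have "w \<noteq> 0" "u \<noteq> -\<i>"
    using assms by auto
  then show "mob_fun (cayley w) (mob_fun (cayley_inv w) u) = u" "mob_fun (cayley_inv w) u \<noteq> w"
    by (simp_all add: cayley_cayley_inv cayley_inv_neq)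
qed (use cayley_inv_in_ball assms in blast)

lemma cayley_onto_closed_upper_half_plane:
  assumes "cmod w = 1" "Im u \<ge> 0"
  obtains y where "cmod y \<le> 1" "y \<noteq> w" "mob_fun (cayley w) y = u"
proof
  have "w \<noteq> 0" "u \<noteq> -\<i>"
    using assms by auto
  then show "mob_fun (cayley w) (mob_fun (cayley_inv w) u) = u" "mob_fun (cayley_inv w) u \<noteq> w"
    by (simp_all add: cayley_cayley_inv cayley_inv_neq)
qed (use cayley_inv_in_cball assms in blast)
text \<open>The point \<open>\<zeta>\<close> itself is listed separately because \<open>mob_fun (cayley \<zeta>) \<zeta>\<close> is the junk
  value of a division by zero.\<close>
definition horodisc :: "complex \<Rightarrow> real \<Rightarrow> complex set" where
  "horodisc \<zeta> h = {y. cmod y \<le> 1 \<and> (y = \<zeta> \<or> h \<le> Im (mob_fun (cayley \<zeta>) y))}"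

lemma horodisc_antimono: "h \<le> h' \<Longrightarrow> horodisc \<zeta> h' \<subseteq> horodisc \<zeta> h"
  unfolding horodisc_def by auto

lemma horocycle_identity:
  assumes "cmod \<zeta> = 1"
  shows "\<rho>\<^sup>2 - (cmod (y - complex_of_real (1 - \<rho>) * \<zeta>))\<^sup>2
    = \<rho> * (1 - (cmod y)\<^sup>2) - (1 - \<rho>) * (cmod (\<zeta> - y))\<^sup>2"
proof -
  have unit: "Re \<zeta> * Re \<zeta> = 1 - Im \<zeta> * Im \<zeta>"
    using assms by (simp add: cmod_def power2_eq_square)
  show ?thesis
    unfolding cmod_power2 unfolding power2_eq_square by (simp add: unit algebra_simps)
qed

lemma mem_cball_horocycle_iff:
  assumes "cmod \<zeta> = 1" "\<rho> \<ge> 0"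
  shows "y \<in> cball (complex_of_real (1 - \<rho>) * \<zeta>) \<rho>
    \<longleftrightarrow> (1 - \<rho>) * (cmod (\<zeta> - y))\<^sup>2 \<le> \<rho> * (1 - (cmod y)\<^sup>2)"
proof -
  have "y \<in> cball (complex_of_real (1 - \<rho>) * \<zeta>) \<rho> \<longleftrightarrow> cmod (y - complex_of_real (1 - \<rho>) * \<zeta>) \<le> \<rho>"
    by (simp add: dist_norm norm_minus_commute)
  also have "\<dots> \<longleftrightarrow> (cmod (y - complex_of_real (1 - \<rho>) * \<zeta>))\<^sup>2 \<le> \<rho>\<^sup>2"
    using assms(2) by (simp add: power2_le_iff_abs_le)
  also have "\<dots> \<longleftrightarrow> (1 - \<rho>) * (cmod (\<zeta> - y))\<^sup>2 \<le> \<rho> * (1 - (cmod y)\<^sup>2)"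
    using horocycle_identity[OF assms(1), of \<rho> y] by linarith
  finally show ?thesis .
qed

lemma cball_horocycle_subset_cball:
  assumes "cmod \<zeta> = 1" "0 \<le> \<rho>" "\<rho> \<le> 1" "y \<in> cball (complex_of_real (1 - \<rho>) * \<zeta>) \<rho>"
  shows "cmod y \<le> 1"
proof -
  have "cmod (complex_of_real (1 - \<rho>)) = 1 - \<rho>"
    using assms(3) by (simp only: norm_of_real)
  then have "cmod (complex_of_real (1 - \<rho>) * \<zeta>) = 1 - \<rho>"
    using assms(1) by (simp only: norm_mult) simp
  moreover have "cmod (y - complex_of_real (1 - \<rho>) * \<zeta>) \<le> \<rho>"
    using assms(4) by (simp add: dist_norm norm_minus_commute)
  ultimately show ?thesis
    using norm_triangle_ineq[of "y - complex_of_real (1 - \<rho>) * \<zeta>" "complex_of_real (1 - \<rho>) * \<zeta>"]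
    by simp
qed

lemma horodisc_eq_cball:
  assumes \<zeta>: "cmod \<zeta> = 1" and h: "h \<ge> 0"
  shows "horodisc \<zeta> h = cball (complex_of_real (1 - 1/(1 + h)) * \<zeta>) (1/(1 + h))"
proof -
  define \<rho> where "\<rho> = 1/(1 + h)"
  have \<rho>: "0 < \<rho>" "\<rho> \<le> 1" "\<rho> * h = 1 - \<rho>"
    unfolding \<rho>_def using h by (auto simp: field_simps)
  have height_iff: "h \<le> Im (mob_fun (cayley \<zeta>) y) \<longleftrightarrow> (1 - \<rho>) * (cmod (\<zeta> - y))\<^sup>2 \<le> \<rho> * (1 - (cmod y)\<^sup>2)"
    if "y \<noteq> \<zeta>" for y
  proof -
    have "h \<le> Im (mob_fun (cayley \<zeta>) y) \<longleftrightarrow> h * (cmod (\<zeta> - y))\<^sup>2 \<le> 1 - (cmod y)\<^sup>2"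
      unfolding Im_cayley[OF \<zeta>] using that by (simp add: pos_le_divide_eq)
    also have "\<dots> \<longleftrightarrow> \<rho> * (h * (cmod (\<zeta> - y))\<^sup>2) \<le> \<rho> * (1 - (cmod y)\<^sup>2)"
      using \<rho> by simp
    finally show ?thesis
      using \<rho>(3) by (metis mult.assoc)
  qed
  have "\<zeta> - complex_of_real (1 - \<rho>) * \<zeta> = complex_of_real \<rho> * \<zeta>"
    by (simp add: algebra_simps)
  then have "cmod (\<zeta> - complex_of_real (1 - \<rho>) * \<zeta>) = \<rho>"
    using \<rho> \<zeta> by (simp add: norm_mult)
  then have centre: "\<zeta> \<in> cball (complex_of_real (1 - \<rho>) * \<zeta>) \<rho>"
    by (simp add: dist_norm norm_minus_commute)
  show ?thesis
    unfolding \<rho>_def[symmetric]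
  proof (intro set_eqI iffI)
    fix y
    assume "y \<in> horodisc \<zeta> h"
    then show "y \<in> cball (complex_of_real (1 - \<rho>) * \<zeta>) \<rho>"
      using centre height_iff[of y] mem_cball_horocycle_iff[OF \<zeta>, of \<rho> y] \<rho>(1)
      unfolding horodisc_def by (cases "y = \<zeta>") auto
  next
    fix y
    assume y: "y \<in> cball (complex_of_real (1 - \<rho>) * \<zeta>) \<rho>"
    then show "y \<in> horodisc \<zeta> h"
      using height_iff[of y] mem_cball_horocycle_iff[OF \<zeta>, of \<rho> y] \<rho>(1,2)
        cball_horocycle_subset_cball[OF \<zeta> _ _ y]
      unfolding horodisc_def by (cases "y = \<zeta>") auto
  qed
qed

section \<open>Conjugating a map of \<open>M(D)\<close> at a boundary point\<close>

lemma affine_upper_half_plane_real_scale: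
  fixes \<alpha> \<beta> :: complex
  assumes H: "\<And>u. Im u > 0 \<Longrightarrow> Im (\<alpha>*u + \<beta>) > 0"
  shows "Im \<alpha> = 0"
proof (rule ccontr)
  assume "Im \<alpha> \<noteq> 0"
  then have "Im (\<alpha> * Complex (-(Re \<alpha> + Im \<beta> + 1)/Im \<alpha>) 1 + \<beta>) = -1"
    by simp
  then show False
    using H[of "Complex (-(Re \<alpha> + Im \<beta> + 1)/Im \<alpha>) 1"] by simp
qed

lemma affine_upper_half_plane_coeffs:
  fixes \<alpha> \<beta> :: complex
  assumes H: "\<And>u. Im u > 0 \<Longrightarrow> Im (\<alpha>*u + \<beta>) > 0"
  shows "Re \<alpha> \<ge> 0" "Im \<beta> \<ge> 0"
proof -
  have pos: "Re \<alpha> * y + Im \<beta> > 0" if "y > 0" for y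
    using H[of "Complex 0 y"] that affine_upper_half_plane_real_scale[OF H] by simp
  show "Re \<alpha> \<ge> 0"
  proof (rule ccontr)
    assume n: "\<not> Re \<alpha> \<ge> 0"
    have "(\<bar>Im \<beta>\<bar> + 1) / (- Re \<alpha>) > 0"
      using n by (intro divide_pos_pos) auto
    moreover have "Re \<alpha> * ((\<bar>Im \<beta>\<bar> + 1) / (- Re \<alpha>)) = -(\<bar>Im \<beta>\<bar> + 1)"
      using n by simp
    ultimately show False
      using pos[of "(\<bar>Im \<beta>\<bar> + 1) / (- Re \<alpha>)"] by linarith
  qed
  show "Im \<beta> \<ge> 0"
  proof (rule ccontr)
    assume n: "\<not> Im \<beta> \<ge> 0"
    define y where "y = -Im \<beta> / (2*(\<bar>Re \<alpha>\<bar> + 1))"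
    have y0: "y > 0"
      using n unfolding y_def by (intro divide_pos_pos) auto
    have "Re \<alpha> * y \<le> (\<bar>Re \<alpha>\<bar> + 1) * y"
      using y0 by (intro mult_right_mono) auto
    also have "\<dots> = -Im \<beta>/2"
      unfolding y_def by (simp add: field_simps add_pos_nonneg)
    finally show False
      using pos[OF y0] n by linarith
  qed
qed

text \<open>If \<open>g w = w'\<close>, then \<open>cayley w' \<circ> g = cayley_conj g w w' \<circ> cayley w\<close>; the right-hand factor is
  an affine map \<open>u \<mapsto> conj_scale g w * u + conj_shift g w\<close> of the upper half-plane.\<close>
fun cayley_conj :: "mob \<Rightarrow> complex \<Rightarrow> complex \<Rightarrow> mob" where
  "cayley_conj (a, b, c, d) w w' = (2*\<i>*w'*(c*w + d), (a + w'*c)*w - (b + w'*d), 0, 2*\<i>*(w'*d - b))"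

definition conj_scale :: "mob \<Rightarrow> complex \<Rightarrow> complex" where
  "conj_scale g w = (case cayley_conj g w (mob_fun g w) of (A, B, _, D) \<Rightarrow> A / D)"

definition conj_shift :: "mob \<Rightarrow> complex \<Rightarrow> complex" where
  "conj_shift g w = (case cayley_conj g w (mob_fun g w) of (A, B, _, D) \<Rightarrow> B / D)"

lemma mob_fun_cayley_conj:
  "mob_fun (cayley_conj g w (mob_fun g w)) u = conj_scale g w * u + conj_shift g w"
proof -
  obtain A B C D where "cayley_conj g w (mob_fun g w) = (A, B, C, D)"
    by (cases "cayley_conj g w (mob_fun g w)")
  moreover have "C = 0"
    using calculation by (cases g) simp
  ultimately show ?thesis
    unfolding conj_scale_def conj_shift_def by (simp add: add_divide_distrib)
qed

lemma cayley_conj_mult: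
  assumes "a*w + b = w'*(c*w + d)"
  shows "mob_scale (2*\<i>*w) (mob_mult (cayley w') (a, b, c, d)) = mob_mult (cayley_conj (a, b, c, d) w w') (cayley w)"
proof -
  have b: "b = w'*(c*w + d) - a*w"
    using assms by (simp add: algebra_simps)
  show ?thesis
    unfolding cayley_def by (simp add: b algebra_simps)
qed

locale boundary_map =
  fixes a b c d w w' :: complex
  assumes in_MD: "in_MD (a, b, c, d)" and unit_w: "cmod w = 1"
    and image_w: "mob_fun (a, b, c, d) w = w'" and unit_image: "cmod w' = 1"
begin

abbreviation "g \<equiv> (a, b, c, d)"
abbreviation "\<alpha> \<equiv> conj_scale g w"
abbreviation "\<beta> \<equiv> conj_shift g w"

lemma det_nonzero: "a*d - b*c \<noteq> 0"
  using in_MD by simp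

lemma maps_ball: "cmod z < 1 \<Longrightarrow> c*z + d \<noteq> 0 \<and> cmod (mob_fun g z) < 1"
  using in_MD by simp

lemma w_nonzero: "w \<noteq> 0" and w'_nonzero: "w' \<noteq> 0"
  using unit_w unit_image by auto

lemma denom_w_nonzero: "c*w + d \<noteq> 0"
  using image_w w'_nonzero by auto

lemma image_w_eq: "a*w + b = w'*(c*w + d)"
  using image_w denom_w_nonzero by (auto simp: field_simps)

lemma conj_scale_eq: "\<alpha> = 2*\<i>*w'*(c*w + d) / (2*\<i>*(w'*d - b))"
  unfolding conj_scale_def image_w by simp

lemma conj_shift_eq: "\<beta> = ((a + w'*c)*w - (b + w'*d)) / (2*\<i>*(w'*d - b))"
  unfolding conj_shift_def image_w by simp

lemma mob_fun_cayley_conj_image: "mob_fun (cayley_conj g w w') u = \<alpha> * u + \<beta>"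
  using mob_fun_cayley_conj[of g w u] unfolding image_w .

lemma cayley_conj_denominator: "(w'*d - b)*(c*w + d) = w*(a*d - b*c)"
proof -
  have "(w'*d - b)*(c*w + d) = d*(a*w + b) - b*(c*w + d)"
    unfolding image_w_eq by (simp add: algebra_simps)
  then show ?thesis
    by (simp add: algebra_simps)
qed

lemma cayley_conj_nondegenerate: "w'*d - b \<noteq> 0" "w'*c - a \<noteq> 0"
proof -
  have "(w'*c - a)*(c*w + d) = c*(a*w + b) - a*(c*w + d)"
    unfolding image_w_eq by (simp add: algebra_simps)
  then have "(w'*c - a)*(c*w + d) = b*c - a*d"
    by (simp add: algebra_simps)
  then show "w'*d - b \<noteq> 0" "w'*c - a \<noteq> 0"
    using cayley_conj_denominator w_nonzero det_nonzero by auto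
qed

lemma mob_fun_mult_cayley_conj:
  "mob_fun (mob_mult (cayley w') g) z = \<alpha> * mob_fun (cayley w) z + \<beta>" if "z \<noteq> w"
proof -
  have "mob_fun (mob_mult (cayley w') g) z = mob_fun (mob_scale (2*\<i>*w) (mob_mult (cayley w') g)) z"
    using mob_fun_scale w_nonzero by simp
  also have "\<dots> = mob_fun (cayley_conj g w w') (mob_fun (cayley w) z)"
    unfolding cayley_conj_mult[OF image_w_eq]
    unfolding cayley_def cayley_conj.simps by (rule mob_fun_mult[symmetric]) (use that in auto)
  finally show ?thesis
    unfolding mob_fun_cayley_conj_image .
qed

lemma cayley_conj_disc:
  "c*z + d \<noteq> 0 \<Longrightarrow> z \<noteq> w \<Longrightarrow> mob_fun (cayley w') (mob_fun g z) = \<alpha> * mob_fun (cayley w) z + \<beta>"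
  using mob_fun_mult_cayley_conj mob_fun_mult unfolding cayley_def by metis

lemma affine_maps_upper_half_plane:
  assumes "Im u > 0"
  shows "Im (\<alpha>*u + \<beta>) > 0"
proof -
  obtain z where z: "cmod z < 1" "z \<noteq> w" "mob_fun (cayley w) z = u"
    using cayley_onto_upper_half_plane[OF unit_w assms] .
  then have "mob_fun (cayley w') (mob_fun g z) = \<alpha>*u + \<beta>"
    using cayley_conj_disc maps_ball by blast
  then show ?thesis
    using Im_cayley_pos[OF unit_image] maps_ball z(1) by metis
qed

lemma scale_real_pos: "\<alpha> = complex_of_real (Re \<alpha>)" "Re \<alpha> > 0"
proof -
  have "\<alpha> \<noteq> 0"
    unfolding conj_scale_eq using w'_nonzero denom_w_nonzero cayley_conj_nondegenerate by simp
  moreover note affine_upper_half_plane_real_scale[OF affine_maps_upper_half_plane]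
    affine_upper_half_plane_coeffs(1)[OF affine_maps_upper_half_plane]
  ultimately show "\<alpha> = complex_of_real (Re \<alpha>)" "Re \<alpha> > 0"
    by (auto simp: complex_eq_iff less_eq_real_def)
qed

lemma Im_affine: "Im (\<alpha>*u + \<beta>) = Re \<alpha> * Im u + Im \<beta>"
  by (subst scale_real_pos(1)) simp

lemma ball_subset_image_if_Im_shift_zero:
  assumes "Im \<beta> = 0"
  shows "ball 0 1 \<subseteq> mob_fun g ` ball 0 1"
proof
  fix y :: complex
  assume "y \<in> ball 0 1"
  then have y: "cmod y < 1" "y \<noteq> w'"
    using unit_image by auto
  define u where "u = (mob_fun (cayley w') y - \<beta>) / \<alpha>"
  have "\<alpha> \<noteq> 0"
    using scale_real_pos(2) by auto
  then have u: "\<alpha> * u + \<beta> = mob_fun (cayley w') y"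
    unfolding u_def by simp
  then have "Im u > 0"
    using Im_affine[of u] Im_cayley_pos[OF unit_image y(1)] scale_real_pos(2) assms
    by (simp add: zero_less_mult_iff)
  then obtain z where z: "cmod z < 1" "z \<noteq> w" "mob_fun (cayley w) z = u"
    using cayley_onto_upper_half_plane[OF unit_w] by blast
  have "mob_fun (cayley w') (mob_fun g z) = mob_fun (cayley w') y"
    using cayley_conj_disc[OF _ z(2)] maps_ball[OF z(1)] z(3) u by simp
  moreover have "mob_fun g z \<noteq> w'"
    using maps_ball[OF z(1)] unit_image by auto
  ultimately have "mob_fun g z = y"
    using cayley_inj[OF w'_nonzero _ y(2)] by blast
  then show "y \<in> mob_fun g ` ball 0 1"
    using z(1) by force
qed

lemma Im_shift_pos: "Im \<beta> > 0"
proof -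
  have "Im \<beta> \<ge> 0"
    using affine_upper_half_plane_coeffs(2)[OF affine_maps_upper_half_plane] .
  moreover have "mob_fun g ` ball 0 1 \<subseteq> ball 0 1"
    using maps_ball by auto
  ultimately show ?thesis
    using ball_subset_image_if_Im_shift_zero in_MD by fastforce
qed

text \<open>At a pole \<open>p\<close> the composite \<open>cayley w' \<circ> g\<close> takes the value \<open>-i\<close>, while the affine map
  sends the real number \<open>cayley w p\<close> (for \<open>|p| = 1\<close>) into the upper half-plane.\<close>
lemma no_pole_in_cball:
  assumes "cmod z \<le> 1"
  shows "c*z + d \<noteq> 0"
proof
  assume pole: "c*z + d = 0"
  then have z: "cmod z = 1" "z \<noteq> w"
    using assms maps_ball[of z] denom_w_nonzero by force+
  have "a*z + b \<noteq> 0"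
  proof
    assume "a*z + b = 0"
    then have "a*d - b*c = 0"
      using pole by (simp add: algebra_simps eq_neg_iff_add_eq_0[symmetric] mult.left_commute)
    then show False
      using det_nonzero by simp
  qed
  moreover have "d = -c*z"
    using pole by (simp add: algebra_simps eq_neg_iff_add_eq_0)
  ultimately have "mob_fun (mob_mult (cayley w') g) z = \<i>*(a*z + b) / (-(a*z + b))"
    unfolding cayley_def by (simp add: algebra_simps)
  also have "\<i>*(a*z + b) / (-(a*z + b)) = -\<i>"
    using \<open>a*z + b \<noteq> 0\<close> by (simp only: divide_minus_right) simp
  finally have "mob_fun (mob_mult (cayley w') g) z = -\<i>" .
  then have "Im (\<alpha> * mob_fun (cayley w) z + \<beta>) = -1"
    using mob_fun_mult_cayley_conj[OF z(2)] by simp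
  moreover have "Im (\<alpha> * mob_fun (cayley w) z + \<beta>) = Im \<beta>"
    unfolding Im_affine Im_cayley_unit[OF unit_w z(1)] by simp
  ultimately show False
    using Im_shift_pos by simp
qed

lemma cayley_conj_cball:
  assumes z: "cmod z \<le> 1" "z \<noteq> w"
  shows "mob_fun g z \<noteq> w'" "cmod (mob_fun g z) \<le> 1"
    "mob_fun (cayley w') (mob_fun g z) = \<alpha> * mob_fun (cayley w) z + \<beta>"
proof -
  have pole: "c*z + d \<noteq> 0"
    using no_pole_in_cball[OF z(1)] .
  show ne: "mob_fun g z \<noteq> w'"
    using mob_fun_inj[OF det_nonzero pole denom_w_nonzero] z(2) image_w by metis
  show eq: "mob_fun (cayley w') (mob_fun g z) = \<alpha> * mob_fun (cayley w) z + \<beta>"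
    using cayley_conj_disc[OF pole z(2)] .
  have "Im (mob_fun (cayley w') (mob_fun g z)) \<ge> 0"
    unfolding eq Im_affine using Im_cayley_nonneg[OF unit_w z(1)] scale_real_pos(2) Im_shift_pos
    by simp
  then have "(1 - (cmod (mob_fun g z))\<^sup>2) / (cmod (w' - mob_fun g z))\<^sup>2 \<ge> 0"
    unfolding Im_cayley[OF unit_image] .
  then show "cmod (mob_fun g z) \<le> 1"
    using ne by (simp add: zero_le_divide_iff abs_square_le_1)
qed

lemma cayley_conj_ext:
  assumes t: "t > 0"
  shows "snd (poincare_ext g (x, t)) > 0"
    "poincare_ext (cayley w') (poincare_ext g (x, t))
      = (\<alpha> * fst (poincare_ext (cayley w) (x, t)) + \<beta>, Re \<alpha> * snd (poincare_ext (cayley w) (x, t)))"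
proof -
  have cd: "c \<noteq> 0 \<or> d \<noteq> 0"
    using det_nonzero by auto
  show "snd (poincare_ext g (x, t)) > 0"
    using poincare_ext_denominator_pos[OF t cd, of x] t det_nonzero by (simp add: Let_def)
  obtain u s where us: "poincare_ext (cayley w) (x, t) = (u, s)"
    by fastforce
  have "poincare_ext (cayley w') (poincare_ext g (x, t)) = poincare_ext (mob_mult (cayley w') g) (x, t)"
    unfolding cayley_def
    by (rule poincare_ext_mult[OF t cd]) (use cayley_conj_nondegenerate in \<open>auto simp: algebra_simps\<close>)
  also have "\<dots> = poincare_ext (mob_scale (2*\<i>*w) (mob_mult (cayley w') g)) (x, t)"
    using poincare_ext_scale w_nonzero by simp
  also have "\<dots> = poincare_ext (mob_mult (cayley_conj g w w') (cayley w)) (x, t)"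
    unfolding cayley_conj_mult[OF image_w_eq] ..
  also have "\<dots> = poincare_ext (cayley_conj g w w') (u, s)"
    unfolding us[symmetric] cayley_def cayley_conj.simps
    by (rule poincare_ext_mult[symmetric, OF t]) (use cayley_conj_nondegenerate in auto)
  also have "\<dots> = ((2*\<i>*w'*(c*w + d)*u + ((a + w'*c)*w - (b + w'*d))) / (2*\<i>*(w'*d - b)),
      cmod (2*\<i>*w'*(c*w + d) / (2*\<i>*(w'*d - b))) * s)"
    unfolding cayley_conj.simps
    by (rule poincare_ext_upper_triangular) (use cayley_conj_nondegenerate in simp)
  also have "\<dots> = (\<alpha> * u + \<beta>, cmod \<alpha> * s)"
    unfolding conj_scale_eq conj_shift_eq by (simp only: add_divide_distrib times_divide_eq_left)
  finally show "poincare_ext (cayley w') (poincare_ext g (x, t))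
      = (\<alpha> * fst (poincare_ext (cayley w) (x, t)) + \<beta>, Re \<alpha> * snd (poincare_ext (cayley w) (x, t)))"
    using us scale_real_pos by (metis abs_of_pos fst_conv norm_of_real snd_conv)
qed

lemma scale_eq_inverse_deriv: "Re \<alpha> = 1 / cmod (deriv (mob_fun g) w)"
proof -
  have det: "cmod (w'*d - b) * cmod (c*w + d) = cmod (a*d - b*c)"
    using arg_cong[OF cayley_conj_denominator, of cmod] unit_w by (simp add: norm_mult)
  have "Re \<alpha> = cmod \<alpha>"
    using scale_real_pos by (metis abs_of_pos norm_of_real)
  also have "\<dots> = cmod (c*w + d) / cmod (w'*d - b)"
    unfolding conj_scale_eq using unit_image by (simp add: norm_mult norm_divide)
  also have "\<dots> = (cmod (c*w + d))\<^sup>2 / cmod (a*d - b*c)"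
    unfolding det[symmetric] using denom_w_nonzero by (simp add: power2_eq_square)
  also have "\<dots> = 1 / cmod (deriv (mob_fun g) w)"
    unfolding deriv_mob_fun[OF denom_w_nonzero] by (simp add: norm_divide norm_power)
  finally show ?thesis .
qed

end
lemma (in boundary_map) boundary_point_unique:
  assumes "cmod z = 1" "cmod (mob_fun g z) = 1"
  shows "z = w"
proof (rule ccontr)
  assume "z \<noteq> w"
  then have "Im (mob_fun (cayley w') (mob_fun g z)) = Re \<alpha> * Im (mob_fun (cayley w) z) + Im \<beta>"
    using cayley_conj_cball[of z] assms(1) Im_affine by simp
  then show False
    using Im_cayley_unit[OF unit_image assms(2)] Im_cayley_unit[OF unit_w assms(1)] Im_shift_pos
    by simp
qed

lemma boundary_mapE:
  assumes "in_MD g" "cmod w = 1" "cmod (mob_fun g w) = 1"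
  obtains a b c d where "g = (a, b, c, d)" "boundary_map a b c d w (mob_fun g w)"
proof -
  obtain a b c d where g: "g = (a, b, c, d)"
    by (cases g)
  moreover have "boundary_map a b c d w (mob_fun g w)"
    unfolding boundary_map_def g using assms[unfolded g] by blast
  ultimately show ?thesis
    using that by blast
qed

lemma in_MD_boundary_point_unique:
  assumes "in_MD g" "cmod w = 1" "cmod (mob_fun g w) = 1" "cmod z = 1" "cmod (mob_fun g z) = 1"
  shows "z = w"
proof -
  obtain a b c d where g: "g = (a, b, c, d)" and "boundary_map a b c d w (mob_fun g w)"
    using boundary_mapE[OF assms(1-3)] .
  then show ?thesis
    using boundary_map.boundary_point_unique assms(4,5) unfolding g by blast
qed

lemma in_MD_Im_conj_shift_pos:
  assumes "in_MD g" "cmod w = 1" "cmod (mob_fun g w) = 1"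
  shows "Im (conj_shift g w) > 0"
proof -
  obtain a b c d where g: "g = (a, b, c, d)" and "boundary_map a b c d w (mob_fun g w)"
    using boundary_mapE[OF assms] .
  then show ?thesis
    using boundary_map.Im_shift_pos unfolding g by blast
qed

lemma finite_in_MD_conj_shift_bounds:
  assumes "finite S" "\<forall>g\<in>S. in_MD g"
  obtains lo hi where "0 < lo"
    "\<And>g w. g \<in> S \<Longrightarrow> cmod w = 1 \<Longrightarrow> cmod (mob_fun g w) = 1
      \<Longrightarrow> lo \<le> Im (conj_shift g w) \<and> cmod (conj_shift g w) \<le> hi"
proof -
  define W where "W = {(g, w). g \<in> S \<and> cmod w = 1 \<and> cmod (mob_fun g w) = 1}"
  define pt where "pt g = (SOME w. cmod w = 1 \<and> cmod (mob_fun g w) = 1)" for g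
  have "W \<subseteq> (\<lambda>g. (g, pt g)) ` S"
  proof
    fix p
    assume "p \<in> W"
    then obtain g w where p: "p = (g, w)" "g \<in> S" and w: "cmod w = 1" "cmod (mob_fun g w) = 1"
      unfolding W_def by auto
    have "cmod (pt g) = 1 \<and> cmod (mob_fun g (pt g)) = 1"
      unfolding pt_def by (rule someI[of "\<lambda>w. cmod w = 1 \<and> cmod (mob_fun g w) = 1" w]) (use w in simp)
    then have "pt g = w"
      using in_MD_boundary_point_unique assms(2) p(2) w by blast
    then show "p \<in> (\<lambda>g. (g, pt g)) ` S"
      using p by auto
  qed
  then have "finite W"
    using assms(1) finite_subset by blast
  define lo where "lo = Min (insert 1 ((\<lambda>(g, w). Im (conj_shift g w)) ` W))"
  define hi where "hi = Max (insert 0 ((\<lambda>(g, w). cmod (conj_shift g w)) ` W))"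
  show ?thesis
  proof
    show "0 < lo"
      unfolding lo_def using \<open>finite W\<close> in_MD_Im_conj_shift_pos assms(2) by (auto simp: W_def)
    fix g w
    assume "g \<in> S" "cmod w = 1" "cmod (mob_fun g w) = 1"
    then have "(g, w) \<in> W"
      unfolding W_def by simp
    then show "lo \<le> Im (conj_shift g w) \<and> cmod (conj_shift g w) \<le> hi"
      unfolding lo_def hi_def using \<open>finite W\<close> by (auto intro!: Min_le Max_ge rev_image_eqI)
  qed
qed
section \<open>Composition sequences\<close>

lemma mem_Inter_horodisc_height:
  fixes H :: "nat \<Rightarrow> real"
  assumes "mono H" "y \<in> (\<Inter>n\<in>{1..}. horodisc \<zeta> (H n))" "y \<noteq> \<zeta>"
  shows "H n \<le> Im (mob_fun (cayley \<zeta>) y)"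
proof -
  have "y \<in> horodisc \<zeta> (H (Suc n))"
    using assms(2) by simp
  then have "H (Suc n) \<le> Im (mob_fun (cayley \<zeta>) y)"
    using assms(3) unfolding horodisc_def by blast
  then show ?thesis
    using monoD[OF assms(1), of n "Suc n"] by linarith
qed

lemma Inter_horodisc_bdd:
  fixes H :: "nat \<Rightarrow> real"
  assumes "mono H" "bdd_above (range H)"
  shows "(\<Inter>n\<in>{1..}. horodisc \<zeta> (H n)) = horodisc \<zeta> (SUP n. H n)"
proof (intro set_eqI iffI)
  fix y
  assume y: "y \<in> (\<Inter>n\<in>{1..}. horodisc \<zeta> (H n))"
  then have "cmod y \<le> 1"
    unfolding horodisc_def by blast
  moreover have "(SUP n. H n) \<le> Im (mob_fun (cayley \<zeta>) y)" if "y \<noteq> \<zeta>"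
    using mem_Inter_horodisc_height[OF assms(1) y that] by (intro cSUP_least) auto
  ultimately show "y \<in> horodisc \<zeta> (SUP n. H n)"
    unfolding horodisc_def by blast
next
  fix y
  assume "y \<in> horodisc \<zeta> (SUP n. H n)"
  then show "y \<in> (\<Inter>n\<in>{1..}. horodisc \<zeta> (H n))"
    using horodisc_antimono[OF cSUP_upper[OF _ assms(2)]] by blast
qed

lemma Inter_horodisc_unbdd:
  fixes H :: "nat \<Rightarrow> real"
  assumes "mono H" "\<not> bdd_above (range H)"
  shows "(\<Inter>n\<in>{1..}. horodisc \<zeta> (H n)) \<subseteq> {\<zeta>}"
proof
  fix y
  assume y: "y \<in> (\<Inter>n\<in>{1..}. horodisc \<zeta> (H n))"
  show "y \<in> {\<zeta>}"
  proof (rule ccontr)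
    assume "y \<notin> {\<zeta>}"
    then have "bdd_above (range H)"
      using mem_Inter_horodisc_height[OF assms(1) y] by (intro bdd_aboveI2) auto
    then show False
      using assms(2) by simp
  qed
qed

lemma chordal_denominator_pos: "(1 + sqnorm3 p) * (1 + sqnorm3 q) > 0"
  unfolding sqnorm3_def by (intro mult_pos_pos add_pos_nonneg) auto

lemma chordal_pos: "fst p \<noteq> fst q \<Longrightarrow> 0 < chordal (Some p) (Some q)"
  unfolding chordal.simps using chordal_denominator_pos[of p q]
  by (intro divide_pos_pos mult_pos_pos) (auto intro: add_pos_nonneg)

lemma tendsto_chordal:
  assumes "P \<longlonglongrightarrow> Q"
  shows "(\<lambda>n. chordal (Some (P n)) (Some R)) \<longlonglongrightarrow> chordal (Some Q) (Some R)"
proof -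
  have "(\<lambda>n. fst (P n)) \<longlonglongrightarrow> fst Q" "(\<lambda>n. snd (P n)) \<longlonglongrightarrow> snd Q"
    using assms by (auto intro: tendsto_fst tendsto_snd)
  then show ?thesis
    unfolding chordal.simps sqnorm3_def
    by (intro tendsto_intros assms) (use chordal_denominator_pos[of Q R] in \<open>auto simp: sqnorm3_def\<close>)
qed

locale boundary_chain =
  fixes f :: "nat \<Rightarrow> mob" and z :: "nat \<Rightarrow> complex"
  assumes in_MD: "n \<ge> 1 \<Longrightarrow> in_MD (f n)"
    and unit: "cmod (z n) = 1"
    and chain: "n \<ge> 1 \<Longrightarrow> mob_fun (f n) (z n) = z (n - 1)"
begin

text \<open>In Cayley coordinates \<open>f n\<close> is \<open>u \<mapsto> \<gamma> n * u + conj_shift (f n) (z n)\<close>, so the composition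
  \<open>comp_seq f n\<close> is \<open>u \<mapsto> gamma_prod n * u + shift n\<close>.\<close>
definition \<gamma> :: "nat \<Rightarrow> real" where
  "\<gamma> k = Re (conj_scale (f k) (z k))"

definition gamma_prod :: "nat \<Rightarrow> real" where
  "gamma_prod n = (\<Prod>k=1..n. \<gamma> k)"

definition shift :: "nat \<Rightarrow> complex" where
  "shift n = (\<Sum>k<n. complex_of_real (gamma_prod k) * conj_shift (f (Suc k)) (z (Suc k)))"

lemma step_boundary_map:
  assumes "k \<ge> 1"
  obtains a b c d where "f k = (a, b, c, d)" "boundary_map a b c d (z k) (z (k - 1))"
  using boundary_mapE[OF in_MD[OF assms] unit[of k], unfolded chain[OF assms], OF unit] .

lemma step_scale:
  assumes "k \<ge> 1"
  shows "conj_scale (f k) (z k) = complex_of_real (\<gamma> k)" "\<gamma> k > 0"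
    "\<gamma> k = 1 / cmod (deriv (mob_fun (f k)) (z k))"
proof -
  obtain a b c d where f: "f k = (a, b, c, d)" and M: "boundary_map a b c d (z k) (z (k - 1))"
    using step_boundary_map[OF assms] .
  show "conj_scale (f k) (z k) = complex_of_real (\<gamma> k)" "\<gamma> k > 0"
    "\<gamma> k = 1 / cmod (deriv (mob_fun (f k)) (z k))"
    unfolding \<gamma>_def f using boundary_map.scale_real_pos[OF M] boundary_map.scale_eq_inverse_deriv[OF M]
    by simp_all
qed

lemma step_shift_pos: "k \<ge> 1 \<Longrightarrow> Im (conj_shift (f k) (z k)) > 0"
  using in_MD_Im_conj_shift_pos[OF in_MD unit] unit chain by simp

lemma step_disc:
  assumes "k \<ge> 1" "cmod y \<le> 1" "y \<noteq> z k"
  shows "mob_fun (f k) y \<noteq> z (k - 1)" "cmod (mob_fun (f k) y) \<le> 1"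
    "mob_fun (cayley (z (k - 1))) (mob_fun (f k) y)
      = complex_of_real (\<gamma> k) * mob_fun (cayley (z k)) y + conj_shift (f k) (z k)"
proof -
  obtain a b c d where f: "f k = (a, b, c, d)" and M: "boundary_map a b c d (z k) (z (k - 1))"
    using step_boundary_map[OF assms(1)] .
  show "mob_fun (f k) y \<noteq> z (k - 1)" "cmod (mob_fun (f k) y) \<le> 1"
    "mob_fun (cayley (z (k - 1))) (mob_fun (f k) y)
      = complex_of_real (\<gamma> k) * mob_fun (cayley (z k)) y + conj_shift (f k) (z k)"
    using boundary_map.cayley_conj_cball[OF M assms(2,3)] step_scale(1)[OF assms(1)]
    unfolding f by simp_all
qed

lemma step_ext:
  assumes "k \<ge> 1" "t > 0"
  shows "snd (poincare_ext (f k) (x, t)) > 0"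
    "poincare_ext (cayley (z (k - 1))) (poincare_ext (f k) (x, t))
      = (complex_of_real (\<gamma> k) * fst (poincare_ext (cayley (z k)) (x, t)) + conj_shift (f k) (z k),
         \<gamma> k * snd (poincare_ext (cayley (z k)) (x, t)))"
proof -
  obtain a b c d where f: "f k = (a, b, c, d)" and M: "boundary_map a b c d (z k) (z (k - 1))"
    using step_boundary_map[OF assms(1)] .
  show "snd (poincare_ext (f k) (x, t)) > 0"
    "poincare_ext (cayley (z (k - 1))) (poincare_ext (f k) (x, t))
      = (complex_of_real (\<gamma> k) * fst (poincare_ext (cayley (z k)) (x, t)) + conj_shift (f k) (z k),
         \<gamma> k * snd (poincare_ext (cayley (z k)) (x, t)))"
    using boundary_map.cayley_conj_ext[OF M assms(2)] step_scale(1)[OF assms(1)]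
    unfolding f \<gamma>_def by simp_all
qed

lemma gamma_prod_Suc: "gamma_prod (Suc n) = gamma_prod n * \<gamma> (Suc n)"
  unfolding gamma_prod_def by (simp add: atLeastAtMostSuc_conv mult.commute)

lemma shift_Suc: "shift (Suc n) = shift n + complex_of_real (gamma_prod n) * conj_shift (f (Suc n)) (z (Suc n))"
  unfolding shift_def by simp

lemma gamma_prod_pos: "gamma_prod n > 0"
  unfolding gamma_prod_def using step_scale(2) by (intro prod_pos) auto

lemma Im_shift_Suc: "Im (shift (Suc n)) = Im (shift n) + gamma_prod n * Im (conj_shift (f (Suc n)) (z (Suc n)))"
  unfolding shift_Suc by simp

lemma mono_Im_shift: "mono (\<lambda>n. Im (shift n))"
  unfolding mono_iff_le_Suc using gamma_prod_pos step_shift_pos by (simp add: Im_shift_Suc less_imp_le)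

lemma Im_shift_nonneg: "Im (shift n) \<ge> 0"
  using monoD[OF mono_Im_shift, of 0 n] by (simp add: shift_def)
lemma comp_seq_fixes: "comp_seq f n (z n) = z 0"
  by (induction n) (use chain in auto)

lemma comp_seq_cayley_conj:
  assumes "cmod y \<le> 1" "y \<noteq> z n"
  shows "comp_seq f n y \<noteq> z 0 \<and> cmod (comp_seq f n y) \<le> 1
    \<and> mob_fun (cayley (z 0)) (comp_seq f n y) = complex_of_real (gamma_prod n) * mob_fun (cayley (z n)) y + shift n"
  using assms
proof (induction n arbitrary: y)
  case 0
  then show ?case
    by (simp add: gamma_prod_def shift_def)
next
  case (Suc n)
  note step = step_disc[of "Suc n" y, simplified, OF Suc.prems]
  have "comp_seq f n (mob_fun (f (Suc n)) y) \<noteq> z 0 \<and> cmod (comp_seq f n (mob_fun (f (Suc n)) y)) \<le> 1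
    \<and> mob_fun (cayley (z 0)) (comp_seq f n (mob_fun (f (Suc n)) y))
      = complex_of_real (gamma_prod n) * mob_fun (cayley (z n)) (mob_fun (f (Suc n)) y) + shift n"
    using Suc.IH step(1,2) by blast
  then show ?case
    using step(3) by (simp add: gamma_prod_Suc shift_Suc algebra_simps)
qed

lemma comp_seq_cball_subset_horodisc:
  assumes "cmod x \<le> 1"
  shows "comp_seq f n x \<in> horodisc (z 0) (Im (shift n))"
proof (cases "x = z n")
  case True
  then show ?thesis
    using comp_seq_fixes unit unfolding horodisc_def by simp
next
  case False
  note conj = comp_seq_cayley_conj[OF assms False]
  have "gamma_prod n * Im (mob_fun (cayley (z n)) x) \<ge> 0"
    using gamma_prod_pos[of n] Im_cayley_nonneg[OF unit assms] by simp
  then show ?thesis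
    using conj unfolding horodisc_def by simp
qed

lemma horodisc_subset_comp_seq_cball:
  assumes y: "y \<in> horodisc (z 0) (Im (shift n))" "y \<noteq> z 0"
  obtains x where "cmod x \<le> 1" "comp_seq f n x = y"
proof -
  define u where "u = (mob_fun (cayley (z 0)) y - shift n) / complex_of_real (gamma_prod n)"
  have u: "complex_of_real (gamma_prod n) * u + shift n = mob_fun (cayley (z 0)) y"
    unfolding u_def using gamma_prod_pos[of n] by simp
  have "Im (shift n) \<le> Im (mob_fun (cayley (z 0)) y)"
    using y unfolding horodisc_def by simp
  then have "gamma_prod n * Im u \<ge> 0"
    using arg_cong[OF u, of Im] by simp
  then have "Im u \<ge> 0"
    using gamma_prod_pos[of n] by (simp add: zero_le_mult_iff)
  then obtain x where x: "cmod x \<le> 1" "x \<noteq> z n" "mob_fun (cayley (z n)) x = u"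
    using cayley_onto_closed_upper_half_plane[OF unit] by blast
  have "comp_seq f n x = y"
    using cayley_inj[of "z 0"] unit[of 0] comp_seq_cayley_conj[OF x(1,2)] x(3) u y
    unfolding horodisc_def by force
  then show ?thesis
    using x(1) that by blast
qed

lemma image_comp_seq: "comp_seq f n ` cball 0 1 = horodisc (z 0) (Im (shift n))"
proof (intro set_eqI iffI)
  fix y
  assume "y \<in> comp_seq f n ` cball 0 1"
  then show "y \<in> horodisc (z 0) (Im (shift n))"
    using comp_seq_cball_subset_horodisc by auto
next
  fix y
  assume y: "y \<in> horodisc (z 0) (Im (shift n))"
  show "y \<in> comp_seq f n ` cball 0 1"
  proof (cases "y = z 0")
    case True
    moreover have "z n \<in> cball 0 1"
      using unit[of n] by simp
    ultimately show ?thesis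
      using comp_seq_fixes[of n] by (metis image_eqI)
  next
    case False
    then obtain x where "cmod x \<le> 1" "comp_seq f n x = y"
      using horodisc_subset_comp_seq_cball[OF y] by blast
    then show ?thesis
      by force
  qed
qed

lemma limit_disc_type_iff_bdd_Im_shift: "limit_disc_type f \<longleftrightarrow> bdd_above (range (\<lambda>n. Im (shift n)))"
proof -
  have Inter: "(\<Inter>n\<in>{1..}. comp_seq f n ` cball 0 1) = (\<Inter>n\<in>{1..}. horodisc (z 0) (Im (shift n)))"
    by (simp add: image_comp_seq)
  show ?thesis
  proof
    assume "limit_disc_type f"
    then obtain c r where "r > 0" and eq: "(\<Inter>n\<in>{1..}. horodisc (z 0) (Im (shift n))) = cball c r"
      unfolding limit_disc_type_def Inter by blast
    show "bdd_above (range (\<lambda>n. Im (shift n)))"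
    proof (rule ccontr)
      assume unbdd: "\<not> bdd_above (range (\<lambda>n. Im (shift n)))"
      have "cball c r \<subseteq> {z 0}"
        using Inter_horodisc_unbdd[where \<zeta>="z 0", OF mono_Im_shift unbdd] eq by simp
      moreover have "c \<in> cball c r" "c + complex_of_real r \<in> cball c r"
        using \<open>r > 0\<close> by (simp_all add: dist_norm)
      ultimately have "c = z 0" "c + complex_of_real r = z 0"
        by blast+
      then show False
        using \<open>r > 0\<close> by simp
    qed
  next
    assume bdd: "bdd_above (range (\<lambda>n. Im (shift n)))"
    define L where "L = (SUP n. Im (shift n))"
    have "L \<ge> 0"
      unfolding L_def using Im_shift_nonneg cSUP_upper[OF _ bdd, of 0] by (meson UNIV_I order_trans)
    then show "limit_disc_type f"
      unfolding limit_disc_type_def Inter Inter_horodisc_bdd[OF mono_Im_shift bdd] L_def[symmetric]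
        horodisc_eq_cball[OF unit \<open>L \<ge> 0\<close>]
      by (intro exI[of _ "complex_of_real (1 - 1/(1 + L)) * z 0"] exI[of _ "1/(1 + L)"]) simp
  qed
qed
lemma ext_comp_seq_cayley_conj:
  assumes "t > 0"
  shows "snd (ext_comp_seq f n (x, t)) > 0 \<and> poincare_ext (cayley (z 0)) (ext_comp_seq f n (x, t))
    = (complex_of_real (gamma_prod n) * fst (poincare_ext (cayley (z n)) (x, t)) + shift n,
       gamma_prod n * snd (poincare_ext (cayley (z n)) (x, t)))"
  using assms
proof (induction n arbitrary: x t)
  case 0
  then show ?case
    by (simp add: gamma_prod_def shift_def)
next
  case (Suc n)
  obtain x' t' where xt: "poincare_ext (f (Suc n)) (x, t) = (x', t')"
    by fastforce
  note step = step_ext[of "Suc n", simplified, OF Suc.prems, of x]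
  have "t' > 0"
    using step(1) xt by simp
  from Suc.IH[OF this, of x'] show ?case
    using step(2) xt by (simp add: gamma_prod_Suc shift_Suc algebra_simps)
qed

lemma ext_comp_seq_j: "ext_comp_seq f n (0, 1) = poincare_ext (cayley_inv (z 0)) (shift n, gamma_prod n)"
proof -
  obtain x t where xt: "ext_comp_seq f n (0, 1) = (x, t)"
    by fastforce
  have "t > 0" "poincare_ext (cayley (z 0)) (x, t) = (shift n, gamma_prod n)"
    using ext_comp_seq_cayley_conj[of 1 n 0] poincare_ext_cayley_j[OF unit] xt by simp_all
  then show ?thesis
    using poincare_ext_cayley_inv_cayley[of "z 0" t x] unit[of 0] xt by force
qed

lemma not_converges_ideally_to_start:
  assumes "convergent shift" "gamma_prod \<longlonglongrightarrow> 0"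
  shows "\<not> converges_ideally f (Some (z 0))"
proof
  assume conv: "converges_ideally f (Some (z 0))"
  obtain b where b: "shift \<longlonglongrightarrow> b"
    using assms(1) convergent_def by blast
  have "Im b \<ge> 0"
    using tendsto_Im[OF b] Im_shift_nonneg by (intro LIMSEQ_le_const) auto
  then have "(\<lambda>n. ext_comp_seq f n (0, 1)) \<longlonglongrightarrow> (mob_fun (cayley_inv (z 0)) b, 0)"
    unfolding ext_comp_seq_j by (rule tendsto_poincare_ext_cayley_inv[OF b assms(2)])
  then have "(\<lambda>n. chordal (Some (ext_comp_seq f n (0, 1))) (Some (z 0, 0)))
      \<longlonglongrightarrow> chordal (Some (mob_fun (cayley_inv (z 0)) b, 0)) (Some (z 0, 0))"
    by (rule tendsto_chordal)
  moreover have "(\<lambda>n. chordal (Some (ext_comp_seq f n (0, 1))) (Some (z 0, 0))) \<longlonglongrightarrow> 0"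
    using conv unfolding converges_ideally_def by simp
  ultimately have "chordal (Some (mob_fun (cayley_inv (z 0)) b, 0)) (Some (z 0, 0)) = 0"
    by (rule LIMSEQ_unique)
  moreover have "z 0 \<noteq> 0"
    using unit[of 0] by auto
  then have "0 < chordal (Some (mob_fun (cayley_inv (z 0)) b, 0)) (Some (z 0, 0))"
    using cayley_inv_neq by (intro chordal_pos) simp
  ultimately show False
    by linarith
qed

end

locale bounded_boundary_chain = boundary_chain +
  fixes lo hi :: real
  assumes lo_pos: "0 < lo"
    and shift_bounds: "k \<ge> 1 \<Longrightarrow> lo \<le> Im (conj_shift (f k) (z k)) \<and> cmod (conj_shift (f k) (z k)) \<le> hi"
begin

lemma Im_shift_bounds: "lo * (\<Sum>k<n. gamma_prod k) \<le> Im (shift n)" "Im (shift n) \<le> hi * (\<Sum>k<n. gamma_prod k)"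
proof -
  have Im: "Im (shift n) = (\<Sum>k<n. gamma_prod k * Im (conj_shift (f (Suc k)) (z (Suc k))))"
    unfolding shift_def by (simp add: Im_sum)
  have "Im (conj_shift (f (Suc k)) (z (Suc k))) \<le> hi" for k
  proof -
    have "cmod (conj_shift (f (Suc k)) (z (Suc k))) \<le> hi"
      using shift_bounds[of "Suc k"] by simp
    then show ?thesis
      using abs_Im_le_cmod[of "conj_shift (f (Suc k)) (z (Suc k))"] by linarith
  qed
  then show "lo * (\<Sum>k<n. gamma_prod k) \<le> Im (shift n)" "Im (shift n) \<le> hi * (\<Sum>k<n. gamma_prod k)"
    unfolding Im sum_distrib_left using shift_bounds gamma_prod_pos
    by (auto intro!: sum_mono simp: mult.commute mult_left_mono less_imp_le)
qed

lemma bdd_Im_shift_iff_summable: "bdd_above (range (\<lambda>n. Im (shift n))) \<longleftrightarrow> summable gamma_prod"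
proof
  assume "bdd_above (range (\<lambda>n. Im (shift n)))"
  then obtain M where "\<And>n. Im (shift n) \<le> M"
    by (auto simp: bdd_above_def)
  then have "(\<Sum>k<n. gamma_prod k) \<le> M / lo" for n
    using Im_shift_bounds(1)[of n] lo_pos by (simp add: pos_le_divide_eq mult.commute order_trans)
  then show "summable gamma_prod"
    using gamma_prod_pos by (intro summableI_nonneg_bounded[where x="M / lo"]) (auto simp: less_imp_le)
next
  assume "summable gamma_prod"
  then have "(\<Sum>k<n. gamma_prod k) \<le> suminf gamma_prod" for n
    using gamma_prod_pos by (intro sum_le_suminf) (auto intro: less_imp_le)
  moreover have "hi \<ge> 0"
    using shift_bounds[of 1] norm_ge_zero order_trans by blast
  ultimately have "Im (shift n) \<le> hi * suminf gamma_prod" for n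
    using Im_shift_bounds(2)[of n] by (meson mult_left_mono order_trans)
  then show "bdd_above (range (\<lambda>n. Im (shift n)))"
    by (rule bdd_aboveI2)
qed

lemma limit_disc_type_iff_summable: "limit_disc_type f \<longleftrightarrow> summable gamma_prod"
  unfolding limit_disc_type_iff_bdd_Im_shift bdd_Im_shift_iff_summable ..

lemma convergent_shift_if_summable:
  assumes "summable gamma_prod"
  shows "convergent shift"
proof -
  have bound: "norm (complex_of_real (gamma_prod k) * conj_shift (f (Suc k)) (z (Suc k))) \<le> hi * gamma_prod k" for k
    using shift_bounds[of "Suc k"] gamma_prod_pos[of k] by (simp add: norm_mult mult.commute mult_left_mono)
  have "summable (\<lambda>k. complex_of_real (gamma_prod k) * conj_shift (f (Suc k)) (z (Suc k)))"
    by (rule summable_comparison_test[where g="\<lambda>k. hi * gamma_prod k"]) (use bound summable_mult[OF assms] in auto)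
  then show ?thesis
    unfolding shift_def convergent_def using summable_LIMSEQ by blast
qed

lemma limit_disc_type_not_converges_ideally_to_start:
  assumes "limit_disc_type f"
  shows "\<not> converges_ideally f (Some (z 0))"
  using assms not_converges_ideally_to_start convergent_shift_if_summable summable_LIMSEQ_zero
  unfolding limit_disc_type_iff_summable by blast

end
theorem lemma3p2:
  fixes f :: "nat \<Rightarrow> mob" and S :: "mob set" and z :: "nat \<Rightarrow> complex"
  assumes "finite S" and "\<forall>g\<in>S. in_MD g"
    and "\<forall>n\<ge>1. f n \<in> S"
    and "\<forall>n. cmod (z n) = 1"
    and "\<forall>n\<ge>1. mob_fun (f n) (z n) = z (n - 1)"
  shows "(limit_disc_type f \<longleftrightarrow>
           summable (\<lambda>n. \<Prod>k=1..Suc n. 1 / cmod (deriv (mob_fun (f k)) (z k))))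
         \<and> (\<forall>q. limit_disc_type f \<and> converges_ideally f q \<longrightarrow> q \<noteq> Some (z 0))"
proof -
  interpret boundary_chain f z
    using assms(2-5) by unfold_locales auto
  obtain lo hi where "0 < lo"
    and bounds: "\<And>g w. g \<in> S \<Longrightarrow> cmod w = 1 \<Longrightarrow> cmod (mob_fun g w) = 1
      \<Longrightarrow> lo \<le> Im (conj_shift g w) \<and> cmod (conj_shift g w) \<le> hi"
    using finite_in_MD_conj_shift_bounds[OF assms(1,2)] by blast
  interpret bounded_boundary_chain f z lo hi
    using \<open>0 < lo\<close> bounds assms(3) unit chain by unfold_locales auto
  have "limit_disc_type f \<longleftrightarrow> summable gamma_prod"
    by (rule limit_disc_type_iff_summable)
  also have "\<dots> \<longleftrightarrow> summable (\<lambda>n. gamma_prod (Suc n))"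
    by (rule summable_Suc_iff[symmetric])
  also have "(\<lambda>n. gamma_prod (Suc n)) = (\<lambda>n. \<Prod>k=1..Suc n. 1 / cmod (deriv (mob_fun (f k)) (z k)))"
    unfolding gamma_prod_def using step_scale(3) by (intro ext prod.cong) auto
  finally show ?thesis
    using limit_disc_type_not_converges_ideally_to_start by blast
qed

end
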